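(* Consider the balls-to-bins problem with a fixed family of bijections $f_{p,q}$. Fix a contiguous interval $U$ of the operation sequence (the node $u$), partitioned into consecutive sub-intervals called segments. Let $\mathcal I_1,\mathcal I_2$ be two sequences of insertions during $U$ (preceded by the same fixed operations) that both start at state $(p_{st},q_{st})$ and both end at state $(p_{end},q_{end})$, with $p_{end}-p_{st}=q_{end}-q_{st}$. Let $\mathrm{dist}(\mathcal I_1,\mathcal I_2)$ be the number of balls among $a_{p_{st}+1},\dots,a_{p_{end}},b_{q_{st}+1},\dots,b_{q_{end}}$ that are inserted in different segments under $\mathcal I_1$ and under $\mathcal I_2$. Then $\mathrm{cost}_u(\mathcal I_1)+\mathrm{cost}_u(\mathcal I_2)\ge \tfrac12\,\mathrm{dist}(\mathcal I_1,\mathcal I_2)$.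
   Context: Balls-to-bins problem: the state is $(p,q)$; there are balls $a_1,\dots,a_p,b_1,\dots,b_q$ and bins $1,\dots,p+q$, and the placement is a bijection $f_{p,q}$ from balls to bins depending only on $(p,q)$. An insertion increments $p$ (creating ball $a_{p+1}$) or $q$ (creating ball $b_{q+1}$), together with a new bin, and the placement switches from $f_{p,q}$ to the new bijection. A ball is moved at operation $t$ if it is created at $t$ or its bin changes at $t$. For a sequence $\mathcal I$ and the interval $U$ with segments, $\mathrm{cost}_u(\mathcal I)$ is the number of pairs $(x,t_2)$ such that ball $x$ is moved at operation $t_2$, the previous operation $t_1<t_2$ at which $x$ was moved exists, and $t_1,t_2$ both lie in $U$ but in different segments. *)

theory Defs
  imports Complex_Main
begin

text \<open>Balls a_i (written A i) and b_j (written B j), indices starting at 1.\<close>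
datatype ball = A nat | B nat

definition balls :: "nat \<Rightarrow> nat \<Rightarrow> ball set" where
  "balls p q = A ` {1..p} \<union> B ` {1..q}"

text \<open>An operation sequence is a list of insertions: True = insert a (increment p),
  False = insert b (increment q).  The process starts at state (0,0); operation t
  (1-based) is the t-th list element; the state after t operations: \<close>
definition state :: "bool list \<Rightarrow> nat \<Rightarrow> nat \<times> nat" where
  "state ops t = (count_list (take t ops) True, count_list (take t ops) False)"

definition balls_at :: "bool list \<Rightarrow> nat \<Rightarrow> ball set" where
  "balls_at ops t = balls (fst (state ops t)) (snd (state ops t))"

definition bin_at :: "(nat \<Rightarrow> nat \<Rightarrow> ball \<Rightarrow> nat) \<Rightarrow> bool list \<Rightarrow> nat \<Rightarrow> ball \<Rightarrow> nat" where
  "bin_at f ops t x = f (fst (state ops t)) (snd (state ops t)) x"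

definition moved :: "(nat \<Rightarrow> nat \<Rightarrow> ball \<Rightarrow> nat) \<Rightarrow> bool list \<Rightarrow> ball \<Rightarrow> nat \<Rightarrow> bool" where
  "moved f ops x t \<longleftrightarrow> 1 \<le> t \<and> t \<le> length ops \<and> x \<in> balls_at ops t \<and>
      (x \<notin> balls_at ops (t - 1) \<or> bin_at f ops (t - 1) x \<noteq> bin_at f ops t x)"

text \<open>The segment of the k-th operation of U (k = 0,1,...) is seg k,
  where seg is monotone, so segments are consecutive sub-intervals.\<close>
definition in_U :: "bool list \<Rightarrow> bool list \<Rightarrow> nat \<Rightarrow> bool" where
  "in_U pre I t \<longleftrightarrow> length pre < t \<and> t \<le> length pre + length I"

definition seg_of :: "(nat \<Rightarrow> nat) \<Rightarrow> bool list \<Rightarrow> nat \<Rightarrow> nat" where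
  "seg_of seg pre t = seg (t - length pre - 1)"

definition cost_u :: "(nat \<Rightarrow> nat \<Rightarrow> ball \<Rightarrow> nat) \<Rightarrow> (nat \<Rightarrow> nat) \<Rightarrow> bool list \<Rightarrow> bool list \<Rightarrow> nat" where
  "cost_u f seg pre I = card {(x, t2). moved f (pre @ I) x t2 \<and>
      (\<exists>t1. t1 < t2 \<and> moved f (pre @ I) x t1 \<and>
            (\<forall>t. t1 < t \<and> t < t2 \<longrightarrow> \<not> moved f (pre @ I) x t) \<and>
            in_U pre I t1 \<and> in_U pre I t2 \<and> seg_of seg pre t1 \<noteq> seg_of seg pre t2)}"

definition ins_time :: "bool list \<Rightarrow> ball \<Rightarrow> nat" where
  "ins_time ops x = (LEAST t. x \<in> balls_at ops t)"

definition dist :: "(nat \<Rightarrow> nat) \<Rightarrow> bool list \<Rightarrow> bool list \<Rightarrow> bool list \<Rightarrow> nat" where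
  "dist seg pre I1 I2 =
     card {x \<in> A ` {count_list pre True + 1 .. count_list (pre @ I1) True}
               \<union> B ` {count_list pre False + 1 .. count_list (pre @ I1) False}.
           seg_of seg pre (ins_time (pre @ I1) x) \<noteq> seg_of seg pre (ins_time (pre @ I2) x)}"

end

theory Submission
  imports Defs
begin

text \<open>Take a new ball x inserted in an earlier segment under I1 than under I2, and a segment
  boundary tau between the two insertion times, so that at tau the ball x is present in run 1
  but not in run 2. Follow the chain x = y(0), y(1), ..., where y(k+1) is the ball that in run 2
  occupies at time tau the bin that y(k) occupies in run 1. A chain ball that is not moved on both
  sides of tau within U already sits in its final bin, and the final placement is the same in
  both runs since they end in the same state. Hence its successor is an old ball that has not
  moved in run 2 within U, and the chain never repeats; so it reaches a ball moved on both sides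
  of tau, whose next move is a cost pair of run 1 or of run 2. Through the common final placement
  the chain can be rebuilt backwards from that pair, so this charging is injective. Charging both
  the balls inserted earlier under I1 and those inserted earlier under I2 gives
  dist \<le> 2 (cost(I1) + cost(I2)).\<close>

lemma count_list_True_False: "count_list xs True + count_list xs False = length xs"
  by (induction xs) auto

lemma state_total: "fst (state ops t) + snd (state ops t) = min t (length ops)"
  unfolding state_def using count_list_True_False[of "take t ops"] by simp

lemma balls_mono: "p \<le> p' \<Longrightarrow> q \<le> q' \<Longrightarrow> balls p q \<subseteq> balls p' q'"
  unfolding balls_def by auto

lemma balls_diff:
  "p \<le> p' \<Longrightarrow> q \<le> q' \<Longrightarrow> balls p' q' - balls p q = A ` {p + 1..p'} \<union> B ` {q + 1..q'}"
  unfolding balls_def by (auto simp: image_iff)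

lemma finite_balls: "finite (balls p q)"
  unfolding balls_def by auto

lemma finite_balls_at: "finite (balls_at ops t)"
  unfolding balls_at_def by (rule finite_balls)

lemma count_list_take_mono: "t \<le> t' \<Longrightarrow> count_list (take t ops) b \<le> count_list (take t' ops) b"
proof -
  assume "t \<le> t'"
  then have "take t' ops = take t ops @ take (t' - t) (drop t ops)"
    by (metis le_add_diff_inverse take_add)
  then show ?thesis by (metis count_list_append le_add1)
qed

lemma balls_at_mono: "t \<le> t' \<Longrightarrow> balls_at ops t \<subseteq> balls_at ops t'"
  unfolding balls_at_def state_def by (simp add: balls_mono count_list_take_mono)

lemma bin_at_eq: "bin_at f ops t = f (fst (state ops t)) (snd (state ops t))"
  by (rule ext) (simp add: bin_at_def)

lemma bij_betw_bin_at:
  assumes "\<And>p q. bij_betw (f p q) (balls p q) {1..p + q}"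
  shows "bij_betw (bin_at f ops t) (balls_at ops t) {1..min t (length ops)}"
  using assms[of "fst (state ops t)" "snd (state ops t)"]
  unfolding bin_at_eq balls_at_def state_total .

lemma state_append: "t \<le> length pre \<Longrightarrow> state (pre @ J) t = state pre t"
  unfolding state_def by simp

lemma balls_at_append: "t \<le> length pre \<Longrightarrow> balls_at (pre @ J) t = balls_at pre t"
  unfolding balls_at_def by (simp add: state_append)

lemma bin_at_append: "t \<le> length pre \<Longrightarrow> bin_at f (pre @ J) t = bin_at f pre t"
  unfolding bin_at_eq by (simp add: state_append)

lemma moved_imp_present: "moved f ops x t \<Longrightarrow> t \<le> length ops \<and> x \<in> balls_at ops t"
  unfolding moved_def by auto

lemma bin_at_unchanged:
  assumes "x \<in> balls_at ops a" "a \<le> b" "b \<le> length ops"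
    and "\<And>s. a < s \<Longrightarrow> s \<le> b \<Longrightarrow> \<not> moved f ops x s"
  shows "bin_at f ops b x = bin_at f ops a x"
  using assms
proof (induction b)
  case 0
  then show ?case by simp
next
  case (Suc b)
  show ?case
  proof (cases "a = Suc b")
    case False
    then have ab: "a \<le> b" using Suc by simp
    have "x \<in> balls_at ops b" "x \<in> balls_at ops (Suc b)"
      using balls_at_mono[OF ab] balls_at_mono[of b "Suc b"] Suc.prems(1) by auto
    moreover have "\<not> moved f ops x (Suc b)" using Suc.prems ab by auto
    ultimately have "bin_at f ops b x = bin_at f ops (Suc b) x"
      using Suc.prems(3) unfolding moved_def by auto
    then show ?thesis using Suc ab by auto
  qed simp
qed

lemma created_imp_moved:
  assumes "x \<in> balls_at ops b" "x \<notin> balls_at ops a" "a \<le> b" "b \<le> length ops"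
  shows "\<exists>s. a < s \<and> s \<le> b \<and> moved f ops x s"
  using assms
proof (induction b)
  case 0
  then show ?case by simp
next
  case (Suc b)
  have "a \<noteq> Suc b" using Suc.prems(1,2) by auto
  show ?case
  proof (cases "x \<in> balls_at ops b")
    case True
    moreover have "a \<le> b" using Suc.prems(3) \<open>a \<noteq> Suc b\<close> by simp
    ultimately obtain s where "a < s" "s \<le> b" "moved f ops x s"
      using Suc by auto
    then show ?thesis by (intro exI[of _ s]) auto
  next
    case False
    then have "moved f ops x (Suc b)" using Suc.prems unfolding moved_def by auto
    then show ?thesis using Suc.prems(3) \<open>a \<noteq> Suc b\<close> by (intro exI[of _ "Suc b"]) auto
  qed
qed

lemma ins_time_props:
  assumes "x \<in> balls_at ops b" "x \<notin> balls_at ops a"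
  shows "a < ins_time ops x" "ins_time ops x \<le> b" "x \<in> balls_at ops (ins_time ops x)"
    "\<And>t. t < ins_time ops x \<Longrightarrow> x \<notin> balls_at ops t"
proof -
  show in_ins: "x \<in> balls_at ops (ins_time ops x)" unfolding ins_time_def
    by (rule LeastI[of "\<lambda>t. x \<in> balls_at ops t", OF assms(1)])
  show "ins_time ops x \<le> b" unfolding ins_time_def
    by (rule Least_le[of "\<lambda>t. x \<in> balls_at ops t", OF assms(1)])
  show "\<And>t. t < ins_time ops x \<Longrightarrow> x \<notin> balls_at ops t" unfolding ins_time_def
    using not_less_Least by blast
  show "a < ins_time ops x"
    using in_ins assms(2) balls_at_mono[of "ins_time ops x" a ops] by (meson not_less subsetD)
qed

lemma exists_adjacent_change:
  fixes h :: "nat \<Rightarrow> 'a"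
  shows "i \<le> j \<Longrightarrow> h i \<noteq> h j \<Longrightarrow> \<exists>k. i \<le> k \<and> k < j \<and> h k \<noteq> h (Suc k)"
proof (induction j)
  case (Suc j)
  then show ?case by (metis le_Suc_eq less_Suc_eq)
qed simp

lemma seg_of_mono:
  assumes "mono_on {..<length I} seg" "length pre < a" "a \<le> b" "b \<le> length pre + length I"
  shows "seg_of seg pre a \<le> seg_of seg pre b"
  unfolding seg_of_def using assms by (intro mono_onD[OF assms(1)]) auto

definition cost_pairs ::
    "(nat \<Rightarrow> nat \<Rightarrow> ball \<Rightarrow> nat) \<Rightarrow> (nat \<Rightarrow> nat) \<Rightarrow> bool list \<Rightarrow> bool list \<Rightarrow> (ball \<times> nat) set"
  where
  "cost_pairs f seg pre I = {(x, t2). moved f (pre @ I) x t2 \<and>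
      (\<exists>t1. t1 < t2 \<and> moved f (pre @ I) x t1 \<and>
            (\<forall>t. t1 < t \<and> t < t2 \<longrightarrow> \<not> moved f (pre @ I) x t) \<and>
            in_U pre I t1 \<and> in_U pre I t2 \<and> seg_of seg pre t1 \<noteq> seg_of seg pre t2)}"

lemma cost_u_eq_card: "cost_u f seg pre I = card (cost_pairs f seg pre I)"
  unfolding cost_u_def cost_pairs_def ..

lemma finite_cost_pairs: "finite (cost_pairs f seg pre I)"
proof -
  let ?ops = "pre @ I"
  have "cost_pairs f seg pre I \<subseteq> balls_at ?ops (length ?ops) \<times> {..length ?ops}"
    using moved_imp_present balls_at_mono[of _ "length ?ops" ?ops]
    unfolding cost_pairs_def by blast
  then show ?thesis by (rule finite_subset) (simp add: finite_balls_at)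
qed

text \<open>The last move up to \<open>tau\<close> lies in the segment of \<open>tau\<close> or earlier, the first move after
  \<open>tau\<close> in a later segment.\<close>
lemma cost_pair_at_next_move:
  assumes mono: "mono_on {..<length I} seg"
    and s0: "length pre < s0" "s0 \<le> tau" "moved f (pre @ I) x s0"
    and s1: "tau < s1" "moved f (pre @ I) x s1"
    and boundary: "seg_of seg pre tau < seg_of seg pre (Suc tau)"
    and tau_le: "Suc tau \<le> length pre + length I"
  shows "(x, LEAST s. tau < s \<and> moved f (pre @ I) x s) \<in> cost_pairs f seg pre I"
proof -
  let ?m = "moved f (pre @ I) x"
  define t2 where "t2 = (LEAST s. tau < s \<and> ?m s)"
  have t2: "tau < t2" "?m t2"
    using LeastI[of "\<lambda>s. tau < s \<and> ?m s", OF conjI[OF s1]] t2_def by auto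
  have before_t2: "\<And>s. tau < s \<Longrightarrow> s < t2 \<Longrightarrow> \<not> ?m s"
    using not_less_Least t2_def by blast
  define t1 where "t1 = (GREATEST s. s \<le> tau \<and> ?m s)"
  have t1: "s0 \<le> t1" "t1 \<le> tau" "?m t1"
    using GreatestI_nat[of "\<lambda>s. s \<le> tau \<and> ?m s" s0 tau]
      Greatest_le_nat[of "\<lambda>s. s \<le> tau \<and> ?m s" s0 tau] s0 t1_def by auto
  have after_t1: "\<And>s. t1 < s \<Longrightarrow> s \<le> tau \<Longrightarrow> \<not> ?m s"
    using Greatest_le_nat[of "\<lambda>s. s \<le> tau \<and> ?m s" _ tau] t1_def by fastforce
  have t2_le: "t2 \<le> length pre + length I" using moved_imp_present[OF t2(2)] by simp
  have "seg_of seg pre t1 \<le> seg_of seg pre tau"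
    using seg_of_mono[OF mono] t1 s0 tau_le by simp
  moreover have "seg_of seg pre (Suc tau) \<le> seg_of seg pre t2"
    using seg_of_mono[OF mono, of pre "Suc tau" t2] t2 t2_le s0 by simp
  ultimately have "seg_of seg pre t1 \<noteq> seg_of seg pre t2" using boundary by simp
  moreover have "\<forall>t. t1 < t \<and> t < t2 \<longrightarrow> \<not> ?m t"
    using after_t1 before_t2 by (meson not_less)
  moreover have "in_U pre I t1" "in_U pre I t2"
    using t1 t2 t2_le s0(1) tau_le by (auto simp: in_U_def)
  ultimately have "(x, t2) \<in> cost_pairs f seg pre I"
    unfolding cost_pairs_def using t1(2,3) t2
    by (intro CollectI case_prodI conjI exI[of _ t1]) auto
  then show ?thesis unfolding t2_def .
qed

definition inserted_earlier ::
    "(nat \<Rightarrow> nat) \<Rightarrow> bool list \<Rightarrow> bool list \<Rightarrow> bool list \<Rightarrow> ball set"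
  where
  "inserted_earlier seg pre I1 I2 =
     {x \<in> balls_at (pre @ I1) (length (pre @ I1)) - balls_at pre (length pre).
        seg_of seg pre (ins_time (pre @ I1) x) < seg_of seg pre (ins_time (pre @ I2) x)}"

lemma dist_le_inserted_earlier:
  assumes "state (pre @ I1) (length (pre @ I1)) = state (pre @ I2) (length (pre @ I2))"
  shows "dist seg pre I1 I2 \<le> card (inserted_earlier seg pre I1 I2) + card (inserted_earlier seg pre I2 I1)"
proof -
  let ?new = "balls_at (pre @ I1) (length (pre @ I1)) - balls_at pre (length pre)"
  have "count_list pre b \<le> count_list (pre @ I1) b" for b by simp
  then have new: "?new = A ` {count_list pre True + 1 .. count_list (pre @ I1) True}
                  \<union> B ` {count_list pre False + 1 .. count_list (pre @ I1) False}"
    unfolding balls_at_def state_def by (simp add: balls_diff)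
  have same_end: "balls_at (pre @ I2) (length (pre @ I2)) = balls_at (pre @ I1) (length (pre @ I1))"
    using assms unfolding balls_at_def by simp
  have "dist seg pre I1 I2 = card {x \<in> ?new.
          seg_of seg pre (ins_time (pre @ I1) x) \<noteq> seg_of seg pre (ins_time (pre @ I2) x)}"
    unfolding dist_def new ..
  also have "\<dots> \<le> card (inserted_earlier seg pre I1 I2 \<union> inserted_earlier seg pre I2 I1)"
    by (rule card_mono) (use same_end in \<open>auto simp: inserted_earlier_def finite_balls_at\<close>)
  also have "\<dots> \<le> card (inserted_earlier seg pre I1 I2) + card (inserted_earlier seg pre I2 I1)"
    by (rule card_Un_le)
  finally show ?thesis .
qed

locale two_runs =
  fixes f :: "nat \<Rightarrow> nat \<Rightarrow> ball \<Rightarrow> nat" and seg :: "nat \<Rightarrow> nat"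
    and pre J1 J2 :: "bool list" and pe qe :: nat
  assumes bij: "\<And>p q. bij_betw (f p q) (balls p q) {1..p + q}"
    and mono: "mono_on {..<length J1} seg"
    and same_length: "length J2 = length J1"
    and end1: "state (pre @ J1) (length (pre @ J1)) = (pe, qe)"
    and end2: "state (pre @ J2) (length (pre @ J2)) = (pe, qe)"
begin

abbreviation "L \<equiv> length pre"
abbreviation "T \<equiv> length pre + length J1"
abbreviation "ops1 \<equiv> pre @ J1"
abbreviation "ops2 \<equiv> pre @ J2"
abbreviation "B1 \<equiv> balls_at ops1"
abbreviation "B2 \<equiv> balls_at ops2"
abbreviation "bin1 \<equiv> bin_at f ops1"
abbreviation "bin2 \<equiv> bin_at f ops2"
abbreviation "segment \<equiv> seg_of seg pre"

lemma mono_J2: "mono_on {..<length J2} seg" using mono same_length by simp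

lemma B1_T: "B1 T = balls pe qe" using end1 unfolding balls_at_def by simp
lemma B2_T: "B2 T = balls pe qe" using end2 same_length unfolding balls_at_def by simp
lemma bin1_T: "bin1 T = f pe qe" using end1 unfolding bin_at_eq by simp
lemma bin2_T: "bin2 T = f pe qe" using end2 same_length unfolding bin_at_eq by simp
lemma B_before_U: "t \<le> L \<Longrightarrow> B1 t = B2 t" by (simp add: balls_at_append)
lemma bin_before_U: "t \<le> L \<Longrightarrow> bin1 t = bin2 t" by (simp add: bin_at_append)

lemma bij_bin1: "t \<le> T \<Longrightarrow> bij_betw (bin1 t) (B1 t) {1..t}"
  using bij_betw_bin_at[OF bij, of ops1 t] by simp
lemma bij_bin2: "t \<le> T \<Longrightarrow> bij_betw (bin2 t) (B2 t) {1..t}"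
  using bij_betw_bin_at[OF bij, of ops2 t] same_length by simp

lemma B1_subset_final: "t \<le> T \<Longrightarrow> B1 t \<subseteq> balls pe qe"
  using balls_at_mono[of t T ops1] B1_T by simp
lemma B2_subset_final: "t \<le> T \<Longrightarrow> B2 t \<subseteq> balls pe qe"
  using balls_at_mono[of t T ops2] B2_T by simp

lemma final_inj: "inj_on (f pe qe) (balls pe qe)" using bij bij_betw_def by blast

definition moved_in_U_until :: "bool list \<Rightarrow> nat \<Rightarrow> ball \<Rightarrow> bool" where
  "moved_in_U_until ops tau y \<longleftrightarrow> (\<exists>s. L < s \<and> s \<le> tau \<and> moved f ops y s)"

definition moved_after :: "bool list \<Rightarrow> nat \<Rightarrow> ball \<Rightarrow> bool" where
  "moved_after ops tau y \<longleftrightarrow> (\<exists>s. tau < s \<and> moved f ops y s)"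

definition crosses :: "bool list \<Rightarrow> nat \<Rightarrow> ball \<Rightarrow> bool" where
  "crosses ops tau y \<longleftrightarrow> moved_in_U_until ops tau y \<and> moved_after ops tau y"

definition next_move :: "bool list \<Rightarrow> nat \<Rightarrow> ball \<Rightarrow> nat" where
  "next_move ops tau y = (LEAST s. tau < s \<and> moved f ops y s)"

definition settled :: "nat \<Rightarrow> ball \<Rightarrow> bool" where
  "settled tau y \<longleftrightarrow> y \<in> B1 tau \<and> \<not> moved_after ops1 tau y"

definition partner :: "nat \<Rightarrow> ball \<Rightarrow> ball" where
  "partner tau y = inv_into (B2 tau) (bin2 tau) (bin1 tau y)"

definition chain :: "nat \<Rightarrow> ball \<Rightarrow> nat \<Rightarrow> ball" where
  "chain tau x k = (partner tau ^^ k) x"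

definition chain_stops :: "nat \<Rightarrow> ball \<Rightarrow> nat \<Rightarrow> bool" where
  "chain_stops tau x k \<longleftrightarrow>
     crosses ops1 tau (chain tau x k) \<or> (0 < k \<and> crosses ops2 tau (chain tau x k))"

definition chain_len :: "nat \<Rightarrow> ball \<Rightarrow> nat" where
  "chain_len tau x = (LEAST k. chain_stops tau x k)"

abbreviation chain_end :: "nat \<Rightarrow> ball \<Rightarrow> ball" where
  "chain_end tau x \<equiv> chain tau x (chain_len tau x)"

definition charge :: "nat \<Rightarrow> ball \<Rightarrow> (ball \<times> nat) + (ball \<times> nat)" where
  "charge tau x =
     (if 0 < chain_len tau x \<and> crosses ops2 tau (chain_end tau x)
      then Inr (chain_end tau x, next_move ops2 tau (chain_end tau x))
      else Inl (chain_end tau x, next_move ops1 tau (chain_end tau x)))"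

definition boundary_start :: "nat \<Rightarrow> ball \<Rightarrow> bool" where
  "boundary_start tau x \<longleftrightarrow> L < tau \<and> Suc tau \<le> T \<and> segment tau < segment (Suc tau) \<and>
     x \<in> B1 tau \<and> x \<notin> B2 tau \<and> x \<notin> B1 L"

lemma chain_0[simp]: "chain tau x 0 = x" by (simp add: chain_def)
lemma chain_Suc: "chain tau x (Suc k) = partner tau (chain tau x k)" by (simp add: chain_def)

context
  fixes tau x assumes st: "boundary_start tau x"
begin

lemma tau_le_T: "tau \<le> T" using st unfolding boundary_start_def by simp
lemma L_le_tau: "L \<le> tau" using st unfolding boundary_start_def by simp

lemma settled_final_bin: "settled tau y \<Longrightarrow> bin1 tau y = f pe qe y \<and> y \<in> balls pe qe"
proof -
  assume s: "settled tau y"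
  have "bin1 T y = bin1 tau y"
    using s tau_le_T unfolding settled_def moved_after_def
    by (intro bin_at_unchanged) auto
  then show ?thesis using bin1_T s B1_subset_final[OF tau_le_T] unfolding settled_def by auto
qed

lemma partner_props:
  assumes y: "y \<in> B1 tau"
  shows "partner tau y \<in> B2 tau" "bin2 tau (partner tau y) = bin1 tau y"
proof -
  have "bin1 tau y \<in> {1..tau}" by (rule bij_betw_apply[OF bij_bin1[OF tau_le_T] y])
  then have m: "bin1 tau y \<in> bin2 tau ` B2 tau"
    using bij_betw_imp_surj_on[OF bij_bin2[OF tau_le_T]] by simp
  show "partner tau y \<in> B2 tau" unfolding partner_def by (rule inv_into_into[OF m])
  show "bin2 tau (partner tau y) = bin1 tau y" unfolding partner_def by (rule f_inv_into_f[OF m])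
qed

lemma partner_inj:
  assumes a: "a \<in> B1 tau" and b: "b \<in> B1 tau" and e: "partner tau a = partner tau b"
  shows "a = b"
proof -
  have "bin1 tau a = bin1 tau b" using partner_props[OF a] partner_props[OF b] e by metis
  then show ?thesis using bij_bin1[OF tau_le_T] a b unfolding bij_betw_def inj_on_def by blast
qed

lemma chain_distinct:
  assumes "\<forall>i<m. settled tau (chain tau x i)"
  shows "i < j \<Longrightarrow> j \<le> m \<Longrightarrow> chain tau x i \<noteq> chain tau x j"
proof (induction i arbitrary: j)
  case 0
  obtain j' where j': "j = Suc j'" using 0 by (cases j) auto
  have "settled tau (chain tau x j')" using assms 0 j' by auto
  then have "chain tau x j \<in> B2 tau" using partner_props j' chain_Suc settled_def by auto
  then show ?case using st unfolding boundary_start_def by auto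
next
  case (Suc i)
  obtain j' where j': "j = Suc j'" using Suc by (cases j) auto
  have si: "settled tau (chain tau x i)" "settled tau (chain tau x j')" using assms Suc j' by auto
  have ne: "chain tau x i \<noteq> chain tau x j'" using Suc j' by auto
  show ?case
  proof
    assume "chain tau x (Suc i) = chain tau x j"
    then have "partner tau (chain tau x i) = partner tau (chain tau x j')" using chain_Suc j' by simp
    then show False using partner_inj si ne unfolding settled_def by blast
  qed
qed

lemma settled_start: "\<not> crosses ops1 tau x \<Longrightarrow> settled tau x"
proof -
  assume nc: "\<not> crosses ops1 tau x"
  have "moved_in_U_until ops1 tau x" unfolding moved_in_U_until_def
    using created_imp_moved[of x ops1 tau L] st tau_le_T unfolding boundary_start_def by auto
  then show ?thesis using nc st unfolding crosses_def settled_def boundary_start_def by auto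
qed

text \<open>The partner \<open>y\<close> of a settled ball \<open>z\<close> occupies the final bin of \<open>z\<close> in run 2 at \<open>tau\<close>.
  Unless \<open>y\<close> crosses \<open>tau\<close> in run 2, it has therefore rested there since time \<open>L\<close>; so it is an old
  ball, and in run 1 it must have left that bin within \<open>U\<close>.\<close>
lemma partner_of_settled_unmoved:
  assumes z: "settled tau z" and ne: "partner tau z \<noteq> z"
    and nc2: "\<not> crosses ops2 tau (partner tau z)"
  shows "\<not> moved_in_U_until ops2 tau (partner tau z)"
proof
  let ?y = "partner tau z"
  assume "moved_in_U_until ops2 tau ?y"
  then have "\<not> moved_after ops2 tau ?y" using nc2 crosses_def by simp
  moreover have y: "?y \<in> B2 tau" using partner_props z settled_def by simp
  ultimately have "bin2 T ?y = bin2 tau ?y"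
    using tau_le_T same_length unfolding moved_after_def by (intro bin_at_unchanged) auto
  also have "\<dots> = f pe qe z" using partner_props z settled_final_bin settled_def by simp
  finally have "f pe qe ?y = f pe qe z" using bin2_T by simp
  moreover have "?y \<in> balls pe qe" using y B2_subset_final[OF tau_le_T] by auto
  ultimately show False using inj_onD[OF final_inj] settled_final_bin[OF z] ne by blast
qed

lemma partner_of_settled_old:
  assumes z: "settled tau z" and ne: "partner tau z \<noteq> z"
    and nc2: "\<not> crosses ops2 tau (partner tau z)"
  shows "partner tau z \<in> B1 L" "bin2 tau (partner tau z) = bin1 L (partner tau z)"
    "moved_in_U_until ops1 tau (partner tau z)"
proof -
  let ?y = "partner tau z"
  have y: "?y \<in> B2 tau" "bin2 tau ?y = bin1 tau z" using partner_props z settled_def by auto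
  have nu: "\<not> moved_in_U_until ops2 tau ?y" by (rule partner_of_settled_unmoved[OF assms])
  have yL: "?y \<in> B2 L"
    using created_imp_moved[of ?y ops2 tau L] y tau_le_T L_le_tau same_length nu
    unfolding moved_in_U_until_def by auto
  have bin_L: "bin2 tau ?y = bin2 L ?y"
    using yL L_le_tau tau_le_T same_length nu unfolding moved_in_U_until_def
    by (intro bin_at_unchanged) auto
  show "?y \<in> B1 L" using yL B_before_U[of L] by simp
  show "bin2 tau ?y = bin1 L ?y" using bin_L bin_before_U[of L] by simp
  show "moved_in_U_until ops1 tau ?y"
  proof (rule ccontr)
    assume nu1: "\<not> moved_in_U_until ops1 tau ?y"
    have "bin1 tau ?y = bin1 L ?y"
      using \<open>?y \<in> B1 L\<close> L_le_tau tau_le_T nu1 unfolding moved_in_U_until_def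
      by (intro bin_at_unchanged) auto
    also have "\<dots> = bin1 tau z" using bin_L bin_before_U[of L] y by simp
    finally have "bin1 tau ?y = bin1 tau z" .
    moreover have "?y \<in> B1 tau" using \<open>?y \<in> B1 L\<close> balls_at_mono[OF L_le_tau] by auto
    moreover have "z \<in> B1 tau" using z settled_def by simp
    ultimately show False using inj_onD[OF bij_betw_imp_inj_on[OF bij_bin1[OF tau_le_T]]] ne by blast
  qed
qed

lemma chain_noncrossing_ball_old:
  assumes k: "1 \<le> k" and prev: "\<forall>i<k. settled tau (chain tau x i)"
    and nc2: "\<not> crosses ops2 tau (chain tau x k)"
  shows "chain tau x k \<in> B1 L" "bin2 tau (chain tau x k) = bin1 L (chain tau x k)"
    "moved_in_U_until ops1 tau (chain tau x k)"
proof -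
  have step: "chain tau x k = partner tau (chain tau x (k - 1))"
    using chain_Suc[of tau x "k - 1"] k by simp
  have "chain tau x k \<noteq> chain tau x (k - 1)"
    using chain_distinct[OF prev, of "k - 1" k] k by simp
  then show "chain tau x k \<in> B1 L" "bin2 tau (chain tau x k) = bin1 L (chain tau x k)"
    "moved_in_U_until ops1 tau (chain tau x k)"
    using partner_of_settled_old[of "chain tau x (k - 1)"] prev k nc2 step by auto
qed

lemma chain_settled_before_stop: "(\<forall>i\<le>k. \<not> chain_stops tau x i) \<Longrightarrow> settled tau (chain tau x k)"
proof (induction k rule: less_induct)
  case (less k)
  show ?case
  proof (cases k)
    case 0
    have "\<not> chain_stops tau x 0" using less.prems by blast
    then have "\<not> crosses ops1 tau x" unfolding chain_stops_def by simp
    then show ?thesis using settled_start 0 by simp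
  next
    case (Suc k')
    have prev: "\<forall>i<k. settled tau (chain tau x i)" using less by simp
    have "\<not> chain_stops tau x k" using less.prems by blast
    then have n2: "\<not> crosses ops2 tau (chain tau x k)" and n1: "\<not> crosses ops1 tau (chain tau x k)"
      using Suc unfolding chain_stops_def by auto
    have bp: "chain tau x k \<in> B1 L" "moved_in_U_until ops1 tau (chain tau x k)"
      using chain_noncrossing_ball_old[of k, OF _ prev n2] Suc by simp_all
    then have "chain tau x k \<in> B1 tau" using balls_at_mono[OF L_le_tau] by auto
    then show ?thesis using bp n1 unfolding crosses_def settled_def by auto
  qed
qed

lemma chain_stops_eventually: "\<exists>k. chain_stops tau x k"
proof (rule ccontr)
  assume "\<not> (\<exists>k. chain_stops tau x k)"
  then have all: "\<And>k. settled tau (chain tau x k)" using chain_settled_before_stop by blast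
  have inj: "inj (chain tau x)"
  proof (rule injI, rule ccontr)
    fix i j assume "chain tau x i = chain tau x j" "i \<noteq> j"
    then show False
      using chain_distinct[of "max i j" "min i j" "max i j"] all
      by (cases "i \<le> j") (auto simp: min_def max_def)
  qed
  have "range (chain tau x) \<subseteq> B1 tau" using all settled_def by blast
  moreover have "finite (B1 tau)" by (rule finite_balls_at)
  ultimately have "finite (range (chain tau x))" by (rule finite_subset)
  then have "finite (UNIV :: nat set)" using finite_imageD inj by blast
  then show False by simp
qed

lemma chain_stops_at_len: "chain_stops tau x (chain_len tau x)"
  unfolding chain_len_def using chain_stops_eventually by (rule LeastI_ex)

lemma chain_continues_below_len: "i < chain_len tau x \<Longrightarrow> \<not> chain_stops tau x i"
  unfolding chain_len_def by (rule not_less_Least)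

lemma chain_settled_below_len: "i < chain_len tau x \<Longrightarrow> settled tau (chain tau x i)"
  using chain_continues_below_len by (intro chain_settled_before_stop) auto

lemma chain_link:
  assumes k: "1 \<le> k" "k \<le> chain_len tau x"
  shows "chain tau x k \<in> B2 tau" "bin2 tau (chain tau x k) = f pe qe (chain tau x (k - 1))"
    "chain tau x (k - 1) \<in> balls pe qe"
proof -
  have z: "settled tau (chain tau x (k - 1))" using chain_settled_below_len k by simp
  have "chain tau x k = partner tau (chain tau x (k - 1))" using chain_Suc[of tau x "k - 1"] k by simp
  then show "chain tau x k \<in> B2 tau" "bin2 tau (chain tau x k) = f pe qe (chain tau x (k - 1))"
    "chain tau x (k - 1) \<in> balls pe qe"
    using partner_props[of "chain tau x (k - 1)"] settled_final_bin[OF z] z settled_def by auto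
qed

lemma chain_ball_old:
  assumes "1 \<le> k" "k \<le> chain_len tau x" "\<not> crosses ops2 tau (chain tau x k)"
  shows "chain tau x k \<in> B1 L" "bin2 tau (chain tau x k) = bin1 L (chain tau x k)"
  using chain_noncrossing_ball_old[OF assms(1) _ assms(3)] chain_settled_below_len assms(2) by auto

lemma chain_inner_not_crosses2:
  "1 \<le> k \<Longrightarrow> k < chain_len tau x \<Longrightarrow> \<not> crosses ops2 tau (chain tau x k)"
  using chain_continues_below_len unfolding chain_stops_def by auto

lemma crosses_cost_pair:
  assumes c: "crosses (pre @ J) tau y" and mono_J: "mono_on {..<length J} seg"
    and len_J: "length J = length J1"
  shows "(y, next_move (pre @ J) tau y) \<in> cost_pairs f seg pre J"
proof -
  obtain s0 where s0: "L < s0" "s0 \<le> tau" "moved f (pre @ J) y s0"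
    using c unfolding crosses_def moved_in_U_until_def by blast
  obtain s1 where s1: "tau < s1" "moved f (pre @ J) y s1"
    using c unfolding crosses_def moved_after_def by blast
  have "segment tau < segment (Suc tau)" "Suc tau \<le> length pre + length J"
    using st len_J unfolding boundary_start_def by auto
  from cost_pair_at_next_move[OF mono_J s0 s1 this] show ?thesis unfolding next_move_def .
qed

lemma charge_cases:
  "(crosses ops1 tau (chain_end tau x) \<and>
      charge tau x = Inl (chain_end tau x, next_move ops1 tau (chain_end tau x))) \<or>
   (crosses ops2 tau (chain_end tau x) \<and>
      charge tau x = Inr (chain_end tau x, next_move ops2 tau (chain_end tau x)))"
  using chain_stops_at_len unfolding charge_def chain_stops_def by auto

lemma charge_mem: "charge tau x \<in> Inl ` cost_pairs f seg pre J1 \<union> Inr ` cost_pairs f seg pre J2"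
  using charge_cases crosses_cost_pair[OF _ mono] crosses_cost_pair[OF _ mono_J2 same_length]
  by auto

lemma bin2_at_next_move:
  assumes K: "0 < chain_len tau x" and c: "crosses ops2 tau (chain_end tau x)"
  shows "bin2 tau (chain_end tau x) =
    bin2 (next_move ops2 tau (chain_end tau x) - 1) (chain_end tau x)"
proof -
  let ?y = "chain_end tau x"
  let ?t = "next_move ops2 tau ?y"
  obtain s1 where s1: "tau < s1" "moved f ops2 ?y s1"
    using c unfolding crosses_def moved_after_def by blast
  have t: "tau < ?t \<and> moved f ops2 ?y ?t" unfolding next_move_def
    by (rule LeastI[of "\<lambda>s. tau < s \<and> moved f ops2 ?y s", OF conjI[OF s1]])
  have tb: "\<And>s. tau < s \<Longrightarrow> s < ?t \<Longrightarrow> \<not> moved f ops2 ?y s"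
    unfolding next_move_def using not_less_Least by blast
  have y2: "?y \<in> B2 tau" using chain_link[of "chain_len tau x"] K by simp
  have "?t \<le> length ops2" using moved_imp_present t by blast
  have "bin2 (?t - 1) ?y = bin2 tau ?y"
    using y2 t \<open>?t \<le> length ops2\<close> tb by (intro bin_at_unchanged) auto
  then show ?thesis by simp
qed

end

lemma charged_ball: "case_sum fst fst (charge tau x) = chain_end tau x"
  by (simp add: charge_def)

lemma isl_charge_iff:
  "isl (charge tau x) \<longleftrightarrow> chain_len tau x = 0 \<or> \<not> crosses ops2 tau (chain_end tau x)"
  by (simp add: charge_def)

lemma charge_last_bin_eq:
  assumes st: "boundary_start tau x" and st': "boundary_start tau' x'"
    and e: "charge tau x = charge tau' x'"
    and K: "0 < chain_len tau x" and K': "0 < chain_len tau' x'"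
  shows "bin2 tau (chain_end tau x) = bin2 tau' (chain_end tau x)"
proof -
  let ?z = "chain_end tau x"
  have zz: "chain_end tau' x' = ?z"
    using charged_ball[of tau x] charged_ball[of tau' x'] e by simp
  show ?thesis
  proof (cases "crosses ops2 tau ?z")
    case True
    then have "charge tau x = Inr (?z, next_move ops2 tau ?z)"
      using K by (simp add: charge_def)
    then have "crosses ops2 tau' ?z" "next_move ops2 tau' ?z = next_move ops2 tau ?z"
      using e zz by (auto simp: charge_def split: if_splits)
    then show ?thesis
      using bin2_at_next_move[OF st K True] bin2_at_next_move[OF st' K'] zz by simp
  next
    case False
    then have "\<not> crosses ops2 tau' ?z"
      using isl_charge_iff[of tau x] isl_charge_iff[of tau' x'] K K' e zz by simp
    then show ?thesis
      using chain_ball_old(2)[OF st _ order.refl False] chain_ball_old(2)[OF st' _ order.refl] K K' zz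
      by simp
  qed
qed

lemma chain_pred_eq:
  assumes st: "boundary_start tau x" and st': "boundary_start tau' x'"
    and k: "1 \<le> k" "k \<le> chain_len tau x" and k': "1 \<le> k'" "k' \<le> chain_len tau' x'"
    and z: "chain tau' x' k' = chain tau x k"
    and bins: "bin2 tau (chain tau x k) = bin2 tau' (chain tau x k)"
  shows "chain tau x (k - 1) = chain tau' x' (k' - 1)"
proof (rule inj_onD[OF final_inj])
  show "f pe qe (chain tau x (k - 1)) = f pe qe (chain tau' x' (k' - 1))"
    using chain_link[OF st k] chain_link[OF st' k'] z bins by simp
  show "chain tau x (k - 1) \<in> balls pe qe" "chain tau' x' (k' - 1) \<in> balls pe qe"
    using chain_link[OF st k] chain_link[OF st' k'] by simp_all
qed

text \<open>Walking both chains back from their common last ball recovers the starting ball.\<close>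
lemma charge_inj_le:
  assumes st: "boundary_start tau x" and st': "boundary_start tau' x'"
    and e: "charge tau x = charge tau' x'" and le: "chain_len tau x \<le> chain_len tau' x'"
  shows "x = x'"
proof -
  define K where "K = chain_len tau x"
  define K' where "K' = chain_len tau' x'"
  have walk_back: "chain tau x (K - m) = chain tau' x' (K' - m)" if "m \<le> K" for m
    using that
  proof (induction m)
    case 0
    show ?case using charged_ball[of tau x] charged_ball[of tau' x'] e unfolding K_def K'_def by simp
  next
    case (Suc m)
    have k: "1 \<le> K - m" "K - m \<le> chain_len tau x" and k': "1 \<le> K' - m" "K' - m \<le> chain_len tau' x'"
      using Suc.prems le unfolding K_def K'_def by auto
    have z: "chain tau' x' (K' - m) = chain tau x (K - m)" using Suc by simp
    have "bin2 tau (chain tau x (K - m)) = bin2 tau' (chain tau x (K - m))"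
    proof (cases m)
      case 0
      then show ?thesis using charge_last_bin_eq[OF st st' e] k k' z by (simp add: K_def K'_def)
    next
      case (Suc m')
      then have "K - m < chain_len tau x" "K' - m < chain_len tau' x'"
        using k k' unfolding K_def K'_def by auto
      then show ?thesis
        using chain_ball_old(2)[OF st k chain_inner_not_crosses2[OF st k(1)]]
          chain_ball_old(2)[OF st' k' chain_inner_not_crosses2[OF st' k'(1)]] z by simp
    qed
    then have "chain tau x (K - m - 1) = chain tau' x' (K' - m - 1)"
      by (rule chain_pred_eq[OF st st' k k' z])
    then show ?case by simp
  qed
  have x: "x = chain tau' x' (K' - K)" using walk_back[of K] by simp
  show ?thesis
  proof (rule ccontr)
    assume "x \<noteq> x'"
    then have j: "1 \<le> K' - K" "K' - K \<le> K'" using x by (cases "K' - K") auto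
    have "\<not> crosses ops2 tau' (chain tau' x' (K' - K))"
    proof (cases "K = 0")
      case True
      then show ?thesis using isl_charge_iff[of tau x] isl_charge_iff[of tau' x'] e j
        unfolding K_def K'_def by simp
    next
      case False
      then show ?thesis using chain_inner_not_crosses2[OF st'] j unfolding K'_def by simp
    qed
    then have "x \<in> B1 L" using chain_ball_old(1)[OF st' j[unfolded K'_def]] x K'_def by simp
    then show False using st unfolding boundary_start_def by simp
  qed
qed

definition boundary_of :: "ball \<Rightarrow> nat" where
  "boundary_of x = (SOME tau. ins_time ops1 x \<le> tau \<and> tau < ins_time ops2 x \<and>
     segment tau \<noteq> segment (Suc tau))"

lemma segment_mono: "L < a \<Longrightarrow> a \<le> b \<Longrightarrow> b \<le> T \<Longrightarrow> segment a \<le> segment b"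
  using seg_of_mono[OF mono] by blast

lemma boundary_start_of:
  assumes "x \<in> inserted_earlier seg pre J1 J2"
  shows "boundary_start (boundary_of x) x"
proof -
  let ?i1 = "ins_time ops1 x" and ?i2 = "ins_time ops2 x"
  have x: "x \<in> B1 T" "x \<notin> B1 L" "segment ?i1 < segment ?i2"
    using assms unfolding inserted_earlier_def by (auto simp: balls_at_append)
  have x2: "x \<in> B2 T" "x \<notin> B2 L" using x B1_T B2_T B_before_U[of L] by simp_all
  note i1 = ins_time_props[OF x(1,2)] and i2 = ins_time_props[OF x2]
  have lt: "?i1 < ?i2"
    using x(3) segment_mono[of ?i2 ?i1] i1 i2 same_length by (meson leD not_less)
  then have "\<exists>tau. ?i1 \<le> tau \<and> tau < ?i2 \<and> segment tau \<noteq> segment (Suc tau)"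
    using exists_adjacent_change[of ?i1 ?i2 segment] x(3) by simp
  then have "?i1 \<le> boundary_of x \<and> boundary_of x < ?i2
      \<and> segment (boundary_of x) \<noteq> segment (Suc (boundary_of x))"
    unfolding boundary_of_def by (rule someI_ex)
  then have tau: "?i1 \<le> boundary_of x" "boundary_of x < ?i2"
    "segment (boundary_of x) \<noteq> segment (Suc (boundary_of x))" by auto
  have "segment (boundary_of x) \<le> segment (Suc (boundary_of x))"
    using segment_mono tau i1 i2 same_length by simp
  moreover have "x \<in> B1 (boundary_of x)" using i1 tau balls_at_mono[of ?i1 "boundary_of x" ops1] by auto
  ultimately show ?thesis unfolding boundary_start_def using tau i1 i2 x same_length by auto
qed

lemma card_inserted_earlier_le:
  "card (inserted_earlier seg pre J1 J2)
     \<le> card (cost_pairs f seg pre J1) + card (cost_pairs f seg pre J2)"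
proof -
  let ?D = "inserted_earlier seg pre J1 J2"
  let ?P = "Inl ` cost_pairs f seg pre J1 \<union> Inr ` cost_pairs f seg pre J2"
  have "inj_on (\<lambda>x. charge (boundary_of x) x) ?D"
  proof (rule inj_onI)
    fix x y assume "x \<in> ?D" "y \<in> ?D" and e: "charge (boundary_of x) x = charge (boundary_of y) y"
    then have x: "boundary_start (boundary_of x) x" and y: "boundary_start (boundary_of y) y"
      using boundary_start_of by auto
    show "x = y"
    proof (cases "chain_len (boundary_of x) x \<le> chain_len (boundary_of y) y")
      case True
      then show ?thesis by (rule charge_inj_le[OF x y e])
    next
      case False
      then show ?thesis using charge_inj_le[OF y x e[symmetric]] by simp
    qed
  qed
  moreover have "(\<lambda>x. charge (boundary_of x) x) ` ?D \<subseteq> ?P"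
    using charge_mem boundary_start_of by blast
  ultimately have "card ?D \<le> card ?P"
    by (rule card_inj_on_le) (simp add: finite_cost_pairs)
  also have "\<dots> = card (Inl ` cost_pairs f seg pre J1 :: (_ + ball \<times> nat) set)
      + card (Inr ` cost_pairs f seg pre J2 :: (ball \<times> nat + _) set)"
    by (rule card_Un_disjoint) (auto simp: finite_cost_pairs)
  also have "\<dots> = card (cost_pairs f seg pre J1) + card (cost_pairs f seg pre J2)"
    by (simp add: card_image)
  finally show ?thesis .
qed

end

theorem mainTheorem11:
  fixes f :: "nat \<Rightarrow> nat \<Rightarrow> ball \<Rightarrow> nat"
    and seg :: "nat \<Rightarrow> nat"
    and pre I1 I2 :: "bool list"
    and pst qst pend qend :: nat
  assumes bij: "\<And>p q. bij_betw (f p q) (balls p q) {1..p + q}"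
    and segs: "mono_on {..<length I1} seg"
    and start: "state pre (length pre) = (pst, qst)"
    and end1: "state (pre @ I1) (length (pre @ I1)) = (pend, qend)"
    and end2: "state (pre @ I2) (length (pre @ I2)) = (pend, qend)"
    and bal: "pend - pst = qend - qst"
  shows "real (cost_u f seg pre I1) + real (cost_u f seg pre I2)
           \<ge> real (dist seg pre I1 I2) / 2"
proof -
  have len: "length I2 = length I1"
    using state_total[of "pre @ I1" "length (pre @ I1)"] state_total[of "pre @ I2" "length (pre @ I2)"]
      end1 end2 by simp
  interpret run12: two_runs f seg pre I1 I2 pend qend
    using bij segs len end1 end2 by unfold_locales auto
  interpret run21: two_runs f seg pre I2 I1 pend qend
    using bij segs len end1 end2 by unfold_locales auto
  have "dist seg pre I1 I2
      \<le> card (inserted_earlier seg pre I1 I2) + card (inserted_earlier seg pre I2 I1)"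
    using end1 end2 by (intro dist_le_inserted_earlier) simp
  also have "\<dots> \<le> 2 * (cost_u f seg pre I1 + cost_u f seg pre I2)"
    using run12.card_inserted_earlier_le run21.card_inserted_earlier_le by (simp add: cost_u_eq_card)
  finally have "real (dist seg pre I1 I2) \<le> real (2 * (cost_u f seg pre I1 + cost_u f seg pre I2))"
    by (simp only: of_nat_le_iff)
  then show ?thesis by simp
qed

end
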